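(* Let $L$ be an $\omega$-regular language over $\Sigma$, let $M=(\Sigma,Q,q_0,\delta)$ be a complete DFA, and let $u\in\Sigma^*$. Define the relation $\approx^u_{R'}$ on $\Sigma^*$ by $x\approx^u_{R'}y$ iff for every $v\in\Sigma^*$, $\big(M(uxv)=M(u)\wedge u(xv)^\omega\in L\big)\Leftrightarrow\big(M(uyv)=M(u)\wedge u(yv)^\omega\in L\big)$. Then the index of $\approx^u_{R'}$ is bounded by $|Q|\cdot|\approx^u_P|$, where $|\approx^u_P|$ is the index of $\approx^u_P$.
   Context: For a complete DFA $M$ and finite word $w$, $M(w)$ is the state reached from the initial state on $w$. The relation $\approx^u_P$ on $\Sigma^*$ is defined by $x\approx^u_P y$ iff for all $v\in\Sigma^*$, $u(xv)^\omega\in L\Leftrightarrow u(yv)^\omega\in L$. The index of an equivalence relation is its number of equivalence classes. *)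

theory Defs
  imports Main "HOL-Library.Omega_Words_Fun" "HOL-Library.Extended_Nat"
begin

definition buchi_lang ::
  "'a set \<Rightarrow> nat set \<Rightarrow> nat set \<Rightarrow> (nat \<times> 'a \<times> nat) set \<Rightarrow> nat set \<Rightarrow> 'a word set" where
  "buchi_lang \<Sigma> S I \<Delta> F =
     {w. (\<forall>i. w i \<in> \<Sigma>) \<and>
         (\<exists>r::nat word. r 0 \<in> I \<and> (\<forall>i. (r i, w i, r (Suc i)) \<in> \<Delta>) \<and>
                        (\<exists>\<^sub>\<infinity> i. r i \<in> F))}"

definition omega_regular :: "'a set \<Rightarrow> 'a word set \<Rightarrow> bool" where
  "omega_regular \<Sigma> L \<longleftrightarrow>
     (\<exists>S I \<Delta> F. finite S \<and> I \<subseteq> S \<and> F \<subseteq> S \<and> \<Delta> \<subseteq> S \<times> \<Sigma> \<times> S \<and>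
                L = buchi_lang \<Sigma> S I \<Delta> F)"

definition complete_dfa :: "'a set \<Rightarrow> 'q set \<Rightarrow> 'q \<Rightarrow> ('q \<Rightarrow> 'a \<Rightarrow> 'q) \<Rightarrow> bool" where
  "complete_dfa \<Sigma> Q q0 \<delta> \<longleftrightarrow> finite \<Sigma> \<and> finite Q \<and> q0 \<in> Q \<and>
     (\<forall>q\<in>Q. \<forall>a\<in>\<Sigma>. \<delta> q a \<in> Q)"

definition dfa_run :: "'q \<Rightarrow> ('q \<Rightarrow> 'a \<Rightarrow> 'q) \<Rightarrow> 'a list \<Rightarrow> 'q" where
  "dfa_run q0 \<delta> w = foldl \<delta> q0 w"

text \<open>u w^omega \<in> L; the omega-power of the empty word is undefined, so we read the
  membership as false when w is empty.\<close>
definition upw_in :: "'a word set \<Rightarrow> 'a list \<Rightarrow> 'a list \<Rightarrow> bool" where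
  "upw_in L u w \<longleftrightarrow> w \<noteq> [] \<and> u \<frown> (w\<^sup>\<omega>) \<in> L"

definition approx_P :: "'a set \<Rightarrow> 'a word set \<Rightarrow> 'a list \<Rightarrow> ('a list \<times> 'a list) set" where
  "approx_P \<Sigma> L u = {(x, y). x \<in> lists \<Sigma> \<and> y \<in> lists \<Sigma> \<and>
      (\<forall>v \<in> lists \<Sigma>. upw_in L u (x @ v) \<longleftrightarrow> upw_in L u (y @ v))}"

definition approx_R' :: "'a set \<Rightarrow> 'a word set \<Rightarrow> 'q \<Rightarrow> ('q \<Rightarrow> 'a \<Rightarrow> 'q) \<Rightarrow> 'a list
    \<Rightarrow> ('a list \<times> 'a list) set" where
  "approx_R' \<Sigma> L q0 \<delta> u = {(x, y). x \<in> lists \<Sigma> \<and> y \<in> lists \<Sigma> \<and>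
      (\<forall>v \<in> lists \<Sigma>.
         (dfa_run q0 \<delta> (u @ x @ v) = dfa_run q0 \<delta> u \<and> upw_in L u (x @ v)) \<longleftrightarrow>
         (dfa_run q0 \<delta> (u @ y @ v) = dfa_run q0 \<delta> u \<and> upw_in L u (y @ v)))}"

definition eq_index :: "'b set \<Rightarrow> ('b \<times> 'b) set \<Rightarrow> enat" where
  "eq_index A R = (if finite (A // R) then enat (card (A // R)) else \<infinity>)"

end

theory Submission
  imports Defs
begin

text \<open>A word's \<open>\<approx>\<^sup>u\<^sub>R\<^sub>'\<close>-class is determined by the pair consisting of the state \<open>M(ux)\<close>
  and its \<open>\<approx>\<^sup>u\<^sub>P\<close>-class: if \<open>M(ux) = M(uy)\<close> then \<open>M(uxv) = M(uyv)\<close> for every \<open>v\<close>, and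
  \<open>x \<approx>\<^sup>u\<^sub>P y\<close> makes the \<open>\<omega>\<close>-membership conditions agree.\<close>

lemma card_quotient_le_card_image:
  assumes "equiv A R" and "finite (f ` A)"
    and "\<And>x y. x \<in> A \<Longrightarrow> y \<in> A \<Longrightarrow> f x = f y \<Longrightarrow> (x, y) \<in> R"
  shows "finite (A // R)" and "card (A // R) \<le> card (f ` A)"
proof -
  let ?g = "\<lambda>b. R `` {inv_into A f b}"
  have quotient_eq: "A // R = ?g ` f ` A"
  proof -
    have "?g (f x) = R `` {x}" if "x \<in> A" for x
      using that assms(3)[of "inv_into A f (f x)" x]
      by (intro equiv_class_eq[OF assms(1)]) (simp add: inv_into_into f_inv_into_f)
    then show ?thesis
      unfolding quotient_def by (auto simp: image_image)
  qed
  show "finite (A // R)"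
    unfolding quotient_eq using assms(2) by blast
  show "card (A // R) \<le> card (f ` A)"
    unfolding quotient_eq using assms(2) by (rule card_image_le)
qed

lemma eq_index_le_card_times_eq_index:
  assumes "equiv A R" and "equiv A P" and "finite B" and "B \<noteq> {}" and "g ` A \<subseteq> B"
    and "\<And>x y. (x, y) \<in> P \<Longrightarrow> g x = g y \<Longrightarrow> (x, y) \<in> R"
  shows "eq_index A R \<le> enat (card B) * eq_index A P"
proof (cases "finite (A // P)")
  case True
  define f where "f x = (g x, P `` {x})" for x
  have image_f: "f ` A \<subseteq> B \<times> (A // P)"
    using assms(5) by (auto simp: f_def intro: quotientI)
  have same_f: "(x, y) \<in> R" if "x \<in> A" "y \<in> A" "f x = f y" for x y
    using that assms(6) eq_equiv_class_iff[OF assms(2) that(1,2)] by (simp add: f_def)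
  have finite_image: "finite (f ` A)"
    using image_f assms(3) True finite_subset by blast
  have "card (f ` A) \<le> card (B \<times> (A // P))"
    using image_f assms(3) True by (intro card_mono) auto
  also have "\<dots> = card B * card (A // P)"
    by (rule card_cartesian_product)
  finally have "card (f ` A) \<le> card B * card (A // P)" .
  moreover have "finite (A // R)"
    using same_f by (rule card_quotient_le_card_image(1)[OF assms(1) finite_image])
  moreover have "card (A // R) \<le> card (f ` A)"
    using same_f by (rule card_quotient_le_card_image(2)[OF assms(1) finite_image])
  ultimately show ?thesis
    using True by (simp add: eq_index_def)
next
  case False
  then show ?thesis
    using assms(3,4) unfolding eq_index_def by simp
qed

lemma foldl_in_states:
  assumes "\<forall>q\<in>Q. \<forall>a\<in>\<Sigma>. \<delta> q a \<in> Q" and "q \<in> Q" and "w \<in> lists \<Sigma>"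
  shows "foldl \<delta> q w \<in> Q"
  using assms(2,3) by (induction w arbitrary: q) (use assms(1) in auto)

lemma dfa_run_in_states:
  assumes "complete_dfa \<Sigma> Q q0 \<delta>" and "w \<in> lists \<Sigma>"
  shows "dfa_run q0 \<delta> w \<in> Q"
  using assms foldl_in_states unfolding complete_dfa_def dfa_run_def by metis

lemma dfa_run_append: "dfa_run q0 \<delta> (x @ y) = foldl \<delta> (dfa_run q0 \<delta> x) y"
  unfolding dfa_run_def by simp

lemma equiv_approx_P: "equiv (lists \<Sigma>) (approx_P \<Sigma> L u)"
  unfolding equiv_def refl_on_def sym_def trans_def approx_P_def by auto

lemma equiv_approx_R': "equiv (lists \<Sigma>) (approx_R' \<Sigma> L q0 \<delta> u)"
  unfolding equiv_def refl_on_def sym_def trans_def approx_R'_def by auto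

lemma approx_R'_if_approx_P_and_same_state:
  assumes "(x, y) \<in> approx_P \<Sigma> L u"
    and "dfa_run q0 \<delta> (u @ x) = dfa_run q0 \<delta> (u @ y)"
  shows "(x, y) \<in> approx_R' \<Sigma> L q0 \<delta> u"
proof -
  have "dfa_run q0 \<delta> (u @ x @ v) = dfa_run q0 \<delta> (u @ y @ v)" for v
    using assms(2) dfa_run_append[of q0 \<delta> "u @ x" v] dfa_run_append[of q0 \<delta> "u @ y" v] by simp
  then show ?thesis
    using assms(1) unfolding approx_R'_def approx_P_def by auto
qed

theorem lemma12:
  fixes \<Sigma> :: "'a set" and L :: "'a word set"
    and Q :: "'q set" and q0 :: 'q and \<delta> :: "'q \<Rightarrow> 'a \<Rightarrow> 'q" and u :: "'a list"
  assumes "omega_regular \<Sigma> L"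
    and "complete_dfa \<Sigma> Q q0 \<delta>"
    and "u \<in> lists \<Sigma>"
  shows "eq_index (lists \<Sigma>) (approx_R' \<Sigma> L q0 \<delta> u)
           \<le> enat (card Q) * eq_index (lists \<Sigma>) (approx_P \<Sigma> L u)"
proof (rule eq_index_le_card_times_eq_index[OF equiv_approx_R' equiv_approx_P])
  show "finite Q" and "Q \<noteq> {}"
    using assms(2) unfolding complete_dfa_def by auto
  show "(\<lambda>x. dfa_run q0 \<delta> (u @ x)) ` lists \<Sigma> \<subseteq> Q"
    using dfa_run_in_states[OF assms(2), of "u @ _"] assms(3) by auto
qed (rule approx_R'_if_approx_P_and_same_state)

end
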